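(* Let $Q_{n,m}$ be as defined in the context. Every coloring of $Q_{n,m}$ has cardinality at least $\operatorname{slog}(n,m+1)$.
   Context: A quantum graph $G$ consists of a finite-dimensional complex inner product space $V(G)$ and a real vector space $E(G)$ of self-adjoint operators on $V(G)$ containing the identity $I$; write $|G|=\dim V(G)$ and $\|G\|=\dim E(G)-1$. A code of $G$ is a subspace $C\subseteq V(G)$ such that there is a function $\epsilon_C:E(G)\to\mathbb{R}$ with $P_CAP_C=\epsilon_C(A)P_C$ for all $A\in E(G)$, where $P_C$ is the orthogonal projection onto $C$. A coloring of $G$ is a set $K$ of codes of $G$ with $\sum_{C\in K}P_C=I$. The step logarithm is defined for positive integers $q$ and nonnegative integers $p$ by $\operatorname{slog}(0,q)=0$ and $\operatorname{slog}(p,q)=\operatorname{slog}(p-\lceil p/q\rceil,q)+1$ for $p\ge1$. Let $n\ge 2$ and $1\le m\le n-1$ be integers. $Q_{n,m}$ denotes any quantum graph with $|Q_{n,m}|=n$, $\|Q_{n,m}\|=m$, such that: (i) $E(Q_{n,m})$ is commutative; (ii) (tropical) $E(Q_{n,m})$ has a basis $\{I,A_1,\dots,A_m\}$ and there is an orthonormal basis of $V(Q_{n,m})$ of common eigenvectors of the $A_i$ such that, writing the eigenvalues of $A_i$ in decreasing order $\lambda_{i,1},\dots,\lambda_{i,n}$ with corresponding common eigenvectors $w_{i,1},\dots,w_{i,n}$, one has $0<\lambda_{i,j+1}<\lambda_{i,j}/n^2$ for all $i$ and $1\le j<n$; (iii) (cyclical) for $1\le i<m$ and all $j$, $w_{i+1,j}=w_{i,j+s_i}$,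 with the second index taken modulo $n$ in $\{1,\dots,n\}$, where $s_i=\lfloor n/m\rfloor+1$ if $1\le i\le (n\bmod m)$ and $s_i=\lfloor n/m\rfloor$ otherwise; (iv) the common eigenvectors are enumerated as $w_1,\dots,w_n$ (each common eigenvector exactly once) so that for every $l\in\{1,\dots,n\}$ one has $w_l=w_{i,\lceil l/m\rceil}$ for some $i\in\{1,\dots,m\}$. *)

theory Defs
  imports "Jordan_Normal_Form.Schur_Decomposition"
begin

text \<open>V(G) is modelled as carrier_vec n (complex column vectors of length n) with the
standard inner product v \<bullet>c w; operators are n x n complex matrices.\<close>

definition csubspace_vec :: "nat \<Rightarrow> complex vec set \<Rightarrow> bool" where
  "csubspace_vec n C \<longleftrightarrow> C \<subseteq> carrier_vec n \<and> 0\<^sub>v n \<in> C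
     \<and> (\<forall>x\<in>C. \<forall>y\<in>C. x + y \<in> C) \<and> (\<forall>a::complex. \<forall>x\<in>C. a \<cdot>\<^sub>v x \<in> C)"

definition orth_proj :: "nat \<Rightarrow> complex vec set \<Rightarrow> complex mat" where
  "orth_proj n C = (THE P. P \<in> carrier_mat n n \<and> P * P = P \<and> mat_adjoint P = P
       \<and> (\<lambda>v. P *\<^sub>v v) ` carrier_vec n = C)"

definition is_code :: "nat \<Rightarrow> complex mat set \<Rightarrow> complex vec set \<Rightarrow> bool" where
  "is_code n E C \<longleftrightarrow> csubspace_vec n C \<and>
     (\<exists>\<epsilon>::complex mat \<Rightarrow> real. \<forall>A\<in>E.
        orth_proj n C * A * orth_proj n C = complex_of_real (\<epsilon> A) \<cdot>\<^sub>m orth_proj n C)"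

definition is_coloring :: "nat \<Rightarrow> complex mat set \<Rightarrow> complex vec set set \<Rightarrow> bool" where
  "is_coloring n E K \<longleftrightarrow> finite K \<and> (\<forall>C\<in>K. is_code n E C) \<and>
     mat n n (\<lambda>(p, q). \<Sum>C\<in>K. orth_proj n C $$ (p, q)) = 1\<^sub>m n"

definition lincomb :: "nat \<Rightarrow> nat \<Rightarrow> (nat \<Rightarrow> complex mat) \<Rightarrow> (nat \<Rightarrow> real) \<Rightarrow> complex mat" where
  "lincomb n m A c = mat n n (\<lambda>(p, q). complex_of_real (c 0) * (1\<^sub>m n) $$ (p, q)
       + (\<Sum>i=1..m. complex_of_real (c i) * A i $$ (p, q)))"

definition shift :: "nat \<Rightarrow> nat \<Rightarrow> nat \<Rightarrow> nat" where
  "shift n m i = (if 1 \<le> i \<and> i \<le> n mod m then n div m + 1 else n div m)"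

text \<open>Step logarithm slog(p,q), for q \<ge> 1 (the value for q = 0 is an irrelevant default).\<close>
function slog :: "nat \<Rightarrow> nat \<Rightarrow> nat" where
  "slog p q = (if p = 0 \<or> q = 0 then 0
               else slog (p - nat \<lceil>real p / real q\<rceil>) q + 1)"
  by auto
termination
proof (relation "measure fst")
  fix p q :: nat
  assume h: "\<not> (p = 0 \<or> q = 0)"
  hence "real p / real q > 0" by simp
  hence "nat \<lceil>real p / real q\<rceil> \<ge> 1" by linarith
  with h show "((p - nat \<lceil>real p / real q\<rceil>, q), p, q) \<in> measure fst" by simp
qed simp

end

theory Submission
  imports Defs
begin

text \<open>
  If P is the projection onto a code C, then P A P = \<epsilon>(A) P makes \<epsilon>(A) the Rayleigh quotient of
  A on C. When dim C > r, C contains a vector orthogonal to the r leading eigenvectors of A_i,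
  so \<epsilon>(A_i) \<le> \<lambda>_{i,r+1}; on the other hand \<lambda>_{i,s} |P w_{i,s}|^2 \<le> \<epsilon>(A_i). For s \<le> r the
  tropical gap \<lambda>_{i,r+1} < \<lambda>_{i,s}/n^2 therefore gives |P w_{i,s}|^2 < 1/n^2.

  By the enumeration, u_1, ..., u_{mr} lie among the r leading eigenvectors of the A_i. Each u_l
  has total weight |P u_l|^2 equal to 1 over the coloring, while each of the at most n codes of
  dimension above r weighs less than 1/n^2 on each of them. Hence the codes of dimension at most r
  have total dimension at least min(n, mr). A family of dimensions summing to n with this property
  has at least slog(n, m + 1) members, as one sees by removing a largest code.
\<close>

section \<open>Inner products and orthonormal bases\<close>

lemma homogeneous_system_nontrivial_solution:
  fixes a :: "'b \<Rightarrow> nat \<Rightarrow> 'a::field"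
  assumes "finite S" and "card S < d"
  shows "\<exists>c. (\<exists>k<d. c k \<noteq> 0) \<and> (\<forall>s\<in>S. (\<Sum>k<d. a s k * c k) = 0)"
  using assms
proof (induction d arbitrary: S a)
  case 0 then show ?case by simp
next
  case (Suc d)
  show ?case
  proof (cases "\<forall>s\<in>S. a s d = 0")
    case True
    let ?c = "\<lambda>k. if k = d then (1::'a) else 0"
    have "\<forall>s\<in>S. (\<Sum>k<Suc d. a s k * ?c k) = 0"
      using True by simp
    then show ?thesis by (intro exI[of _ ?c]) auto
  next
    case False
    then obtain s0 where s0: "s0 \<in> S" "a s0 d \<noteq> 0" by auto
    \<comment> \<open>Gaussian elimination of the last unknown using equation s0.\<close>
    let ?b = "\<lambda>s k. a s k - a s d / a s0 d * a s0 k"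
    have "card (S - {s0}) < d"
      using Suc.prems s0 card_gt_0_iff[of S] by (auto simp: card_Diff_singleton)
    then obtain c' where c': "\<exists>k<d. c' k \<noteq> 0" "\<forall>s\<in>S - {s0}. (\<Sum>k<d. ?b s k * c' k) = 0"
      using Suc.IH[of "S - {s0}" ?b] Suc.prems by auto
    define T where "T = (\<Sum>k<d. a s0 k * c' k)"
    define c where "c = (\<lambda>k. if k < d then c' k else - T / a s0 d)"
    have "(\<Sum>k<Suc d. a s k * c k) = 0" if s: "s \<in> S" for s
    proof -
      have expand: "(\<Sum>k<Suc d. a s k * c k) = (\<Sum>k<d. a s k * c' k) - a s d * T / a s0 d"
        by (simp add: c_def)
      show ?thesis
      proof (cases "s = s0")
        case True
        then show ?thesis using expand s0 T_def by simp
      next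
        case False
        hence "(\<Sum>k<d. ?b s k * c' k) = 0" using c' s by auto
        hence "(\<Sum>k<d. a s k * c' k) - a s d / a s0 d * T = 0"
          unfolding T_def by (simp add: algebra_simps sum_subtractf sum_distrib_left)
        then show ?thesis using expand by simp
      qed
    qed
    moreover have "\<exists>k<Suc d. c k \<noteq> 0" using c' by (auto simp: c_def)
    ultimately show ?thesis by blast
  qed
qed

text \<open>x \<bullet>c y without dimension side conditions; the two agree on carrier_vec n.\<close>
definition cinner :: "nat \<Rightarrow> complex vec \<Rightarrow> complex vec \<Rightarrow> complex" where
  "cinner n x y = (\<Sum>p<n. x $ p * cnj (y $ p))"

definition lin_comb :: "nat \<Rightarrow> complex vec list \<Rightarrow> (nat \<Rightarrow> complex) \<Rightarrow> complex vec" where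
  "lin_comb n bs c = vec n (\<lambda>p. \<Sum>k<length bs. c k * bs ! k $ p)"

definition orthonormal :: "nat \<Rightarrow> complex vec list \<Rightarrow> bool" where
  "orthonormal n bs \<longleftrightarrow> set bs \<subseteq> carrier_vec n \<and>
     (\<forall>k<length bs. \<forall>k'<length bs. cinner n (bs ! k) (bs ! k') = (if k = k' then 1 else 0))"

definition orthonormal_basis :: "nat \<Rightarrow> complex vec set \<Rightarrow> complex vec list \<Rightarrow> bool" where
  "orthonormal_basis n C bs \<longleftrightarrow> orthonormal n bs \<and> set bs \<subseteq> C \<and>
     (\<forall>x\<in>C. lin_comb n bs (\<lambda>k. cinner n x (bs ! k)) = x)"

definition proj_mat :: "nat \<Rightarrow> complex vec list \<Rightarrow> complex mat" where
  "proj_mat n bs = mat n n (\<lambda>(p, q). \<Sum>k<length bs. bs ! k $ p * cnj (bs ! k $ q))"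

definition proj_weight :: "nat \<Rightarrow> complex vec list \<Rightarrow> complex vec \<Rightarrow> real" where
  "proj_weight n bs y = (\<Sum>k<length bs. (cmod (cinner n y (bs ! k)))\<^sup>2)"

lemma proj_weight_nonneg: "proj_weight n bs y \<ge> 0"
  unfolding proj_weight_def by (simp add: sum_nonneg)

lemma cscalar_prod_eq_cinner:
  assumes "x \<in> carrier_vec n" "y \<in> carrier_vec n"
  shows "x \<bullet>c y = cinner n x y"
  using assms unfolding cinner_def scalar_prod_def by (auto intro: sum.cong simp: lessThan_atLeast0)

lemma mult_mat_vec_nth:
  assumes "A \<in> carrier_mat n n" "x \<in> carrier_vec n" "p < n"
  shows "(A *\<^sub>v x) $ p = (\<Sum>q<n. A $$ (p, q) * x $ q)"
  using assms by (auto simp: scalar_prod_def lessThan_atLeast0 intro!: sum.cong)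

lemma smult_mat_mult_vec:
  assumes "P \<in> carrier_mat n n" "v \<in> carrier_vec n"
  shows "(a \<cdot>\<^sub>m P) *\<^sub>v v = a \<cdot>\<^sub>v (P *\<^sub>v v)"
  using assms by (intro eq_vecI) (auto simp: scalar_prod_def sum_distrib_left mult.assoc)

lemma eq_mat_by_mult_vec:
  fixes A B :: "complex mat"
  assumes A: "A \<in> carrier_mat n n" and B: "B \<in> carrier_mat n n"
    and eq: "\<And>x. x \<in> carrier_vec n \<Longrightarrow> A *\<^sub>v x = B *\<^sub>v x"
  shows "A = B"
proof (rule eq_matI)
  fix i j assume "i < dim_row B" and "j < dim_col B"
  hence i: "i < n" and j: "j < n" using B by auto
  have "(M *\<^sub>v unit_vec n j) $ i = M $$ (i, j)" if M: "M \<in> carrier_mat n n" for M :: "complex mat"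
  proof -
    have "(M *\<^sub>v unit_vec n j) $ i = (\<Sum>q<n. if q = j then M $$ (i, q) else 0)"
      unfolding mult_mat_vec_nth[OF M unit_vec_carrier i] by (intro sum.cong refl) (auto simp: unit_vec_def)
    also have "\<dots> = M $$ (i, j)" using j by simp
    finally show ?thesis .
  qed
  with eq[OF unit_vec_carrier] A B show "A $$ (i, j) = B $$ (i, j)" by metis
qed (use A B in auto)

lemma lin_comb_carrier [simp]: "lin_comb n bs c \<in> carrier_vec n"
  and lin_comb_dim [simp]: "dim_vec (lin_comb n bs c) = n"
  and lin_comb_nth [simp]: "p < n \<Longrightarrow> lin_comb n bs c $ p = (\<Sum>k<length bs. c k * bs ! k $ p)"
  unfolding lin_comb_def by simp_all

lemma cinner_swap: "cinner n y x = cnj (cinner n x y)"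
  unfolding cinner_def by (simp add: mult.commute)

lemma cinner_lin_comb_left: "cinner n (lin_comb n bs c) y = (\<Sum>k<length bs. c k * cinner n (bs ! k) y)"
  unfolding cinner_def
  by (simp add: sum_distrib_left sum_distrib_right mult.assoc sum.swap[of _ "{..<n}"])

lemma cinner_diff_left:
  "x \<in> carrier_vec n \<Longrightarrow> y \<in> carrier_vec n \<Longrightarrow> cinner n (x - y) z = cinner n x z - cinner n y z"
  unfolding cinner_def by (simp add: sum_subtractf algebra_simps)

lemma cinner_smult_left: "x \<in> carrier_vec n \<Longrightarrow> cinner n (a \<cdot>\<^sub>v x) z = a * cinner n x z"
  unfolding cinner_def by (simp add: sum_distrib_left algebra_simps)

lemma cinner_smult_right: "x \<in> carrier_vec n \<Longrightarrow> cinner n z (a \<cdot>\<^sub>v x) = cnj a * cinner n z x"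
  unfolding cinner_def by (simp add: sum_distrib_left algebra_simps)

lemma cinner_self: "cinner n x x = of_real (\<Sum>p<n. (cmod (x $ p))\<^sup>2)"
  unfolding cinner_def of_real_sum by (intro sum.cong refl) (simp add: complex_norm_square[symmetric])

lemma cinner_self_real: "cinner n x x = of_real (Re (cinner n x x))"
  unfolding cinner_self by simp

lemma cinner_self_nonneg: "Re (cinner n x x) \<ge> 0"
  unfolding cinner_self by (simp add: sum_nonneg)

lemma cinner_self_eq_0:
  assumes "x \<in> carrier_vec n" and "cinner n x x = 0"
  shows "x = 0\<^sub>v n"
proof -
  have "(\<Sum>p<n. (cmod (x $ p))\<^sup>2) = 0"
    using assms(2) unfolding cinner_self of_real_eq_0_iff by simp
  hence "\<forall>p\<in>{..<n}. (cmod (x $ p))\<^sup>2 = 0" by (subst (asm) sum_nonneg_eq_0_iff) auto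
  thus ?thesis using assms(1) by (intro eq_vecI) auto
qed

lemma cinner_self_pos:
  assumes "x \<in> carrier_vec n" and "x \<noteq> 0\<^sub>v n"
  shows "Re (cinner n x x) > 0"
  using cinner_self_nonneg[of n x] cinner_self_eq_0[OF assms(1)] cinner_self_real[of n x] assms(2)
  by (metis less_eq_real_def of_real_0)

lemma cinner_cnj_mult: "cinner n x y * cinner n y x = of_real ((cmod (cinner n x y))\<^sup>2)"
  by (subst cinner_swap[of n y]) (simp add: complex_norm_square[symmetric])

lemma orthonormal_basisD:
  assumes "orthonormal_basis n C bs"
  shows "orthonormal n bs" "set bs \<subseteq> C" "x \<in> C \<Longrightarrow> lin_comb n bs (\<lambda>k. cinner n x (bs ! k)) = x"
  using assms unfolding orthonormal_basis_def by blast+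

lemma orthonormal_carrier: "orthonormal n bs \<Longrightarrow> k < length bs \<Longrightarrow> bs ! k \<in> carrier_vec n"
  unfolding orthonormal_def by auto

lemma orthonormal_coeff:
  assumes "orthonormal n bs" "j < length bs"
  shows "cinner n (lin_comb n bs c) (bs ! j) = c j"
proof -
  have "cinner n (lin_comb n bs c) (bs ! j) = (\<Sum>k<length bs. if k = j then c k else 0)"
    unfolding cinner_lin_comb_left using assms unfolding orthonormal_def by (intro sum.cong) auto
  also have "\<dots> = c j" using assms(2) by simp
  finally show ?thesis .
qed

lemma orthonormal_length_le:
  assumes "orthonormal n bs"
  shows "length bs \<le> n"
proof (rule ccontr)
  assume "\<not> length bs \<le> n"
  then have "card {..<n} < length bs" by simp
  from homogeneous_system_nontrivial_solution[OF _ this, of "\<lambda>p k. bs ! k $ p"]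
  obtain c where c: "\<exists>k<length bs. c k \<noteq> 0" "\<forall>p\<in>{..<n}. (\<Sum>k<length bs. bs ! k $ p * c k) = 0"
    by auto
  have "lin_comb n bs c = 0\<^sub>v n"
    using c(2) by (intro eq_vecI) (auto simp: mult.commute)
  hence "cinner n (lin_comb n bs c) (bs ! k) = 0" for k unfolding cinner_def by simp
  with orthonormal_coeff[OF assms] c(1) show False by metis
qed

lemma orthonormal_snoc:
  assumes on: "orthonormal n bs" and z: "z \<in> carrier_vec n" and nz: "z \<noteq> 0\<^sub>v n"
    and orth: "\<forall>k<length bs. cinner n z (bs ! k) = 0"
  shows "orthonormal n (bs @ [complex_of_real (1 / sqrt (Re (cinner n z z))) \<cdot>\<^sub>v z])"
proof -
  define r where "r = Re (cinner n z z)"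
  define b where "b = complex_of_real (1 / sqrt r) \<cdot>\<^sub>v z"
  have "r > 0" unfolding r_def by (rule cinner_self_pos[OF z nz])
  moreover have "cinner n z z = of_real r" unfolding r_def by (rule cinner_self_real)
  ultimately have "complex_of_real (1 / sqrt r) * cnj (complex_of_real (1 / sqrt r)) * cinner n z z = 1"
    by (simp flip: of_real_mult add: real_sqrt_mult[symmetric])
  hence bb: "cinner n b b = 1"
    using z unfolding b_def by (simp add: cinner_smult_left cinner_smult_right mult_ac)
  have bk: "cinner n b (bs ! k) = 0" "cinner n (bs ! k) b = 0" if "k < length bs" for k
    using orth that z unfolding b_def
    by (simp_all add: cinner_smult_left cinner_smult_right, subst cinner_swap, simp)
  have "orthonormal n (bs @ [b])"
    unfolding orthonormal_def
  proof (intro conjI allI impI)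
    show "set (bs @ [b]) \<subseteq> carrier_vec n" using on z unfolding orthonormal_def b_def by auto
    fix k k' assume "k < length (bs @ [b])" "k' < length (bs @ [b])"
    then show "cinner n ((bs @ [b]) ! k) ((bs @ [b]) ! k') = (if k = k' then 1 else 0)"
      using on bb bk unfolding orthonormal_def
      by (cases "k < length bs"; cases "k' < length bs") (auto simp: nth_append)
  qed
  then show ?thesis unfolding b_def r_def .
qed

lemma csubspace_carrier: "csubspace_vec n C \<Longrightarrow> C \<subseteq> carrier_vec n"
  unfolding csubspace_vec_def by auto

lemma csubspace_carrier_vec: "csubspace_vec n (carrier_vec n)"
  unfolding csubspace_vec_def by auto

lemma lin_comb_in_csubspace:
  assumes C: "csubspace_vec n C" and bs: "set bs \<subseteq> C"
  shows "lin_comb n bs c \<in> C"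
proof -
  have "vec n (\<lambda>p. \<Sum>k<d. c k * bs ! k $ p) \<in> C" if "d \<le> length bs" for d
    using that
  proof (induction d)
    case 0
    have "vec n (\<lambda>p. \<Sum>k<0. c k * bs ! k $ p) = 0\<^sub>v n" by auto
    then show ?case using C unfolding csubspace_vec_def by simp
  next
    case (Suc d)
    have bd: "bs ! d \<in> C" using Suc.prems bs by auto
    hence "vec n (\<lambda>p. \<Sum>k<Suc d. c k * bs ! k $ p) = vec n (\<lambda>p. \<Sum>k<d. c k * bs ! k $ p) + c d \<cdot>\<^sub>v bs ! d"
      using csubspace_carrier[OF C] by (intro eq_vecI) auto
    moreover have "c d \<cdot>\<^sub>v bs ! d \<in> C" using C bd unfolding csubspace_vec_def by auto
    ultimately show ?case using Suc C unfolding csubspace_vec_def by auto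
  qed
  from this[of "length bs"] show ?thesis unfolding lin_comb_def by simp
qed

lemma orthonormal_maximal_expansion:
  assumes C: "csubspace_vec n C" and on: "orthonormal n bs" and bs: "set bs \<subseteq> C"
    and maximal: "\<And>z. z \<in> C \<Longrightarrow> \<forall>k<length bs. cinner n z (bs ! k) = 0 \<Longrightarrow> z = 0\<^sub>v n"
    and x: "x \<in> C"
  shows "lin_comb n bs (\<lambda>k. cinner n x (bs ! k)) = x"
proof -
  let ?l = "lin_comb n bs (\<lambda>k. cinner n x (bs ! k))"
  have xc: "x \<in> carrier_vec n" using x csubspace_carrier[OF C] by auto
  have "x + (-1) \<cdot>\<^sub>v ?l \<in> C"
    using C x lin_comb_in_csubspace[OF C bs] unfolding csubspace_vec_def by auto
  moreover have "x + (-1) \<cdot>\<^sub>v ?l = x - ?l" using xc by (intro eq_vecI) auto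
  moreover have "\<forall>k<length bs. cinner n (x - ?l) (bs ! k) = 0"
    using orthonormal_coeff[OF on] xc by (simp add: cinner_diff_left)
  ultimately have residual: "x - ?l = 0\<^sub>v n" using maximal by auto
  have "?l $ p = x $ p" if "p < n" for p
    using arg_cong[OF residual, of "\<lambda>v. v $ p"] that xc by simp
  then show ?thesis using xc by (intro eq_vecI) auto
qed

lemma orthonormal_basis_exists:
  assumes C: "csubspace_vec n C"
  shows "\<exists>bs. orthonormal_basis n C bs"
proof -
  define Q where "Q = (\<lambda>l. \<exists>bs. orthonormal n bs \<and> set bs \<subseteq> C \<and> length bs = l)"
  have Q0: "Q 0" unfolding Q_def orthonormal_def by auto
  have Q_le: "Q l \<Longrightarrow> l \<le> n" for l unfolding Q_def using orthonormal_length_le by auto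
  have "Q (GREATEST l. Q l)" by (rule GreatestI_nat[of Q 0 n, OF Q0]) (use Q_le in auto)
  then obtain bs where on: "orthonormal n bs" and bs: "set bs \<subseteq> C" and len: "length bs = (GREATEST l. Q l)"
    unfolding Q_def by auto
  have "z = 0\<^sub>v n" if z: "z \<in> C" and orth: "\<forall>k<length bs. cinner n z (bs ! k) = 0" for z
  proof (rule ccontr)
    assume nz: "z \<noteq> 0\<^sub>v n"
    have zc: "z \<in> carrier_vec n" using z csubspace_carrier[OF C] by auto
    let ?b = "complex_of_real (1 / sqrt (Re (cinner n z z))) \<cdot>\<^sub>v z"
    have "?b \<in> C" using C z unfolding csubspace_vec_def by auto
    with orthonormal_snoc[OF on zc nz orth] bs have "Q (Suc (length bs))"
      unfolding Q_def by (intro exI[of _ "bs @ [?b]"]) auto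
    then show False unfolding len using Greatest_le_nat[of Q _ n] Q_le by fastforce
  qed
  then show ?thesis unfolding orthonormal_basis_def
    using on bs orthonormal_maximal_expansion[OF C on bs] by blast
qed

lemma orthonormal_full_length_basis:
  assumes on: "orthonormal n us" and len: "length us = n"
  shows "orthonormal_basis n (carrier_vec n) us"
proof -
  have "z = 0\<^sub>v n" if z: "z \<in> carrier_vec n" and orth: "\<forall>k<length us. cinner n z (us ! k) = 0" for z
    using orthonormal_length_le[OF orthonormal_snoc[OF on z _ orth]] len by fastforce
  then show ?thesis unfolding orthonormal_basis_def
    using on orthonormal_maximal_expansion[OF csubspace_carrier_vec on] orthonormal_def by blast
qed

section \<open>Orthogonal projections\<close>

lemma proj_mat_carrier [simp]: "proj_mat n bs \<in> carrier_mat n n"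
  and proj_mat_dim [simp]: "dim_row (proj_mat n bs) = n" "dim_col (proj_mat n bs) = n"
  unfolding proj_mat_def by simp_all

lemma proj_mat_mult_vec_carrier [simp]: "x \<in> carrier_vec n \<Longrightarrow> proj_mat n bs *\<^sub>v x \<in> carrier_vec n"
  by (rule mult_mat_vec_carrier[OF proj_mat_carrier])

lemma proj_mat_mult_vec:
  assumes x: "x \<in> carrier_vec n"
  shows "proj_mat n bs *\<^sub>v x = lin_comb n bs (\<lambda>k. cinner n x (bs ! k))"
proof (rule eq_vecI)
  fix p assume "p < dim_vec (lin_comb n bs (\<lambda>k. cinner n x (bs ! k)))"
  hence p: "p < n" by simp
  have "(proj_mat n bs *\<^sub>v x) $ p = (\<Sum>q<n. \<Sum>k<length bs. bs ! k $ p * cnj (bs ! k $ q) * x $ q)"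
    using mult_mat_vec_nth[OF proj_mat_carrier x p] p unfolding proj_mat_def by (simp add: sum_distrib_right)
  also have "\<dots> = (\<Sum>k<length bs. cinner n x (bs ! k) * bs ! k $ p)"
    unfolding cinner_def by (subst sum.swap) (simp add: sum_distrib_left sum_distrib_right mult_ac)
  finally show "(proj_mat n bs *\<^sub>v x) $ p = lin_comb n bs (\<lambda>k. cinner n x (bs ! k)) $ p"
    using p by simp
qed (use x in simp)

lemma mat_adjoint_nth:
  assumes "A \<in> carrier_mat n n" and "i < n" and "j < n"
  shows "mat_adjoint A $$ (i, j) = cnj (A $$ (j, i))"
  using assms unfolding mat_adjoint_def mat_of_rows_def by auto

lemma mat_adjoint_carrier: "A \<in> carrier_mat n n \<Longrightarrow> mat_adjoint A \<in> carrier_mat n n"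
  unfolding mat_adjoint_def mat_of_rows_def by auto

lemma self_adjoint_cinner:
  assumes A: "A \<in> carrier_mat n n" and sa: "mat_adjoint A = A"
    and x: "x \<in> carrier_vec n" and y: "y \<in> carrier_vec n"
  shows "cinner n (A *\<^sub>v x) y = cinner n x (A *\<^sub>v y)"
proof -
  have herm: "A $$ (p, q) = cnj (A $$ (q, p))" if "p < n" "q < n" for p q
    using mat_adjoint_nth[OF A that] sa by simp
  have "cinner n (A *\<^sub>v x) y = (\<Sum>p<n. (\<Sum>q<n. A $$ (p, q) * x $ q) * cnj (y $ p))"
    unfolding cinner_def using mult_mat_vec_nth[OF A x] by simp
  also have "\<dots> = (\<Sum>p<n. (\<Sum>q<n. cnj (A $$ (q, p)) * x $ q) * cnj (y $ p))"
  proof (intro sum.cong refl arg_cong2[where f = "(*)"])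
    fix p q assume "p \<in> {..<n}" "q \<in> {..<n}"
    then show "A $$ (p, q) = cnj (A $$ (q, p))" by (intro herm) auto
  qed
  also have "\<dots> = (\<Sum>q<n. \<Sum>p<n. cnj (A $$ (q, p)) * x $ q * cnj (y $ p))"
    by (subst sum.swap) (simp add: sum_distrib_right)
  also have "\<dots> = (\<Sum>q<n. x $ q * cnj (\<Sum>p<n. A $$ (q, p) * y $ p))"
    by (simp add: sum_distrib_left mult_ac)
  also have "\<dots> = cinner n x (A *\<^sub>v y)"
    unfolding cinner_def using mult_mat_vec_nth[OF A y] by simp
  finally show ?thesis .
qed

lemma proj_mat_adjoint: "mat_adjoint (proj_mat n bs) = proj_mat n bs"
proof (rule eq_matI)
  fix i j assume "i < dim_row (proj_mat n bs)" "j < dim_col (proj_mat n bs)"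
  hence ij: "i < n" "j < n" by (auto simp: proj_mat_def)
  show "mat_adjoint (proj_mat n bs) $$ (i, j) = proj_mat n bs $$ (i, j)"
    unfolding mat_adjoint_nth[OF proj_mat_carrier ij] using ij by (simp add: proj_mat_def mult.commute)
qed (use mat_adjoint_carrier[OF proj_mat_carrier, of n bs] in auto)

lemma proj_mat_fixes:
  assumes "orthonormal_basis n C bs" "C \<subseteq> carrier_vec n" "x \<in> C"
  shows "proj_mat n bs *\<^sub>v x = x"
  using assms proj_mat_mult_vec orthonormal_basisD(3) by auto

lemma proj_mat_range:
  assumes "csubspace_vec n C" "orthonormal_basis n C bs" "x \<in> carrier_vec n"
  shows "proj_mat n bs *\<^sub>v x \<in> C"
  using assms proj_mat_mult_vec lin_comb_in_csubspace orthonormal_basisD(2) by auto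

lemma cinner_proj_mat_self:
  "y \<in> carrier_vec n \<Longrightarrow> cinner n (proj_mat n bs *\<^sub>v y) y = of_real (proj_weight n bs y)"
  unfolding proj_weight_def proj_mat_mult_vec cinner_lin_comb_left cinner_cnj_mult by simp

lemma proj_mat_idempotent:
  assumes C: "csubspace_vec n C" and B: "orthonormal_basis n C bs"
  shows "proj_mat n bs * proj_mat n bs = proj_mat n bs"
proof (rule eq_mat_by_mult_vec[of _ n])
  fix x :: "complex vec" assume x: "x \<in> carrier_vec n"
  have "(proj_mat n bs * proj_mat n bs) *\<^sub>v x = proj_mat n bs *\<^sub>v (proj_mat n bs *\<^sub>v x)"
    using x by (simp add: assoc_mult_mat_vec[of _ n n _ n])
  also have "\<dots> = proj_mat n bs *\<^sub>v x"
    by (rule proj_mat_fixes[OF B csubspace_carrier[OF C] proj_mat_range[OF C B x]])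
  finally show "(proj_mat n bs * proj_mat n bs) *\<^sub>v x = proj_mat n bs *\<^sub>v x" .
qed auto

lemma proj_mat_image:
  assumes C: "csubspace_vec n C" and B: "orthonormal_basis n C bs"
  shows "(\<lambda>v. proj_mat n bs *\<^sub>v v) ` carrier_vec n = C"
proof
  show "(\<lambda>v. proj_mat n bs *\<^sub>v v) ` carrier_vec n \<subseteq> C" using proj_mat_range[OF C B] by auto
  show "C \<subseteq> (\<lambda>v. proj_mat n bs *\<^sub>v v) ` carrier_vec n"
  proof
    fix x assume "x \<in> C"
    then show "x \<in> (\<lambda>v. proj_mat n bs *\<^sub>v v) ` carrier_vec n"
      using proj_mat_fixes[OF B csubspace_carrier[OF C]] csubspace_carrier[OF C]
      by (intro image_eqI[of _ _ x]) auto
  qed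
qed

lemma eq_vec_by_cinner:
  assumes x: "x \<in> carrier_vec n" and y: "y \<in> carrier_vec n"
    and eq: "\<And>z. z \<in> carrier_vec n \<Longrightarrow> cinner n x z = cinner n y z"
  shows "x = y"
proof -
  have "cinner n (x - y) (x - y) = 0" using eq[of "x - y"] x y by (simp add: cinner_diff_left)
  then have "x - y = 0\<^sub>v n" using x y by (intro cinner_self_eq_0) auto
  have "x $ p = y $ p" if p: "p < n" for p
  proof -
    have "(x - y) $ p = 0" using \<open>x - y = 0\<^sub>v n\<close> p by simp
    then show ?thesis using p y by simp
  qed
  then show ?thesis using x y by (intro eq_vecI) auto
qed

text \<open>Q fixes C = range P and P fixes C = range Q, so (Q x, y) = (P Q x, y) = (x, Q P y) = (x, P y).\<close>
lemma self_adjoint_idempotent_eq_proj_mat: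
  assumes C: "csubspace_vec n C" and B: "orthonormal_basis n C bs"
    and Q: "Q \<in> carrier_mat n n" and Q_idem: "Q * Q = Q" and Q_adj: "mat_adjoint Q = Q"
    and Q_image: "(\<lambda>v. Q *\<^sub>v v) ` carrier_vec n = C"
  shows "Q = proj_mat n bs"
proof (rule eq_mat_by_mult_vec[OF Q proj_mat_carrier])
  let ?P = "proj_mat n bs"
  have Cc: "C \<subseteq> carrier_vec n" by (rule csubspace_carrier[OF C])
  have Q_range: "Q *\<^sub>v x \<in> C" if "x \<in> carrier_vec n" for x using Q_image that by auto
  have Q_fixes: "Q *\<^sub>v y = y" if "y \<in> C" for y
  proof -
    obtain x where x: "x \<in> carrier_vec n" "y = Q *\<^sub>v x" using Q_image \<open>y \<in> C\<close> by auto
    have "(Q * Q) *\<^sub>v x = Q *\<^sub>v (Q *\<^sub>v x)" using x Q by (intro assoc_mult_mat_vec) auto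
    then show ?thesis using Q_idem x by simp
  qed
  fix x :: "complex vec" assume x: "x \<in> carrier_vec n"
  show "Q *\<^sub>v x = ?P *\<^sub>v x"
  proof (rule eq_vec_by_cinner)
    fix y :: "complex vec" assume y: "y \<in> carrier_vec n"
    have "cinner n (Q *\<^sub>v x) y = cinner n (?P *\<^sub>v (Q *\<^sub>v x)) y"
      using proj_mat_fixes[OF B Cc Q_range[OF x]] by simp
    also have "\<dots> = cinner n (Q *\<^sub>v x) (?P *\<^sub>v y)"
      using x y Q by (simp add: self_adjoint_cinner[OF proj_mat_carrier proj_mat_adjoint])
    also have "\<dots> = cinner n x (Q *\<^sub>v (?P *\<^sub>v y))"
      using x y by (simp add: self_adjoint_cinner[OF Q Q_adj])
    also have "\<dots> = cinner n (?P *\<^sub>v x) y"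
      using Q_fixes[OF proj_mat_range[OF C B y]] x y
      by (simp add: self_adjoint_cinner[OF proj_mat_carrier proj_mat_adjoint])
    finally show "cinner n (Q *\<^sub>v x) y = cinner n (?P *\<^sub>v x) y" .
  qed (use x Q in simp_all)
qed

lemma orth_proj_eq_proj_mat:
  assumes C: "csubspace_vec n C" and B: "orthonormal_basis n C bs"
  shows "orth_proj n C = proj_mat n bs"
  unfolding orth_proj_def
  using proj_mat_idempotent[OF C B] proj_mat_adjoint proj_mat_image[OF C B]
    self_adjoint_idempotent_eq_proj_mat[OF C B]
  by (intro the_equality) auto

section \<open>Rayleigh quotients of codes\<close>

definition parseval_family :: "nat \<Rightarrow> 'i set \<Rightarrow> ('i \<Rightarrow> complex vec) \<Rightarrow> bool" where
  "parseval_family n J w \<longleftrightarrow> (\<forall>j\<in>J. w j \<in> carrier_vec n) \<and>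
     (\<forall>x\<in>carrier_vec n. \<forall>y\<in>carrier_vec n. cinner n y x = (\<Sum>j\<in>J. cinner n y (w j) * cinner n (w j) x))"

lemma parseval_family_carrier: "parseval_family n J w \<Longrightarrow> j \<in> J \<Longrightarrow> w j \<in> carrier_vec n"
  unfolding parseval_family_def by auto

lemma parseval_identity:
  assumes "parseval_family n J w" "x \<in> carrier_vec n" "y \<in> carrier_vec n"
  shows "cinner n y x = (\<Sum>j\<in>J. cinner n y (w j) * cinner n (w j) x)"
  using assms unfolding parseval_family_def by blast

lemma orthonormal_full_length_parseval:
  assumes on: "orthonormal n us" and len: "length us = n"
  shows "parseval_family n {..<n} (\<lambda>k. us ! k)"
  unfolding parseval_family_def
proof (intro conjI ballI)
  fix x y :: "complex vec" assume x: "x \<in> carrier_vec n" and y: "y \<in> carrier_vec n"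
  have "cinner n y x = cinner n (lin_comb n us (\<lambda>k. cinner n y (us ! k))) x"
    using orthonormal_basisD(3)[OF orthonormal_full_length_basis[OF on len] y] by simp
  then show "cinner n y x = (\<Sum>k<n. cinner n y (us ! k) * cinner n (us ! k) x)"
    unfolding cinner_lin_comb_left len .
qed (use orthonormal_carrier[OF on] len in simp)

lemma parseval_family_reindex:
  assumes w: "parseval_family n J w" and h: "bij_betw h J' J" and v: "\<forall>j\<in>J'. v j = w (h j)"
  shows "parseval_family n J' v"
  unfolding parseval_family_def
proof (intro conjI ballI)
  show "v j \<in> carrier_vec n" if "j \<in> J'" for j
    using w h v that unfolding parseval_family_def bij_betw_def by auto
  fix x y :: "complex vec" assume "x \<in> carrier_vec n" "y \<in> carrier_vec n"
  then have "cinner n y x = (\<Sum>j\<in>J. cinner n y (w j) * cinner n (w j) x)"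
    by (rule parseval_identity[OF w])
  also have "\<dots> = (\<Sum>j\<in>J'. cinner n y (v j) * cinner n (v j) x)"
    using v by (simp add: sum.reindex_bij_betw[OF h, symmetric])
  finally show "cinner n y x = (\<Sum>j\<in>J'. cinner n y (v j) * cinner n (v j) x)" .
qed

lemma parseval_norm:
  assumes "parseval_family n J w" and "x \<in> carrier_vec n"
  shows "cinner n x x = of_real (\<Sum>j\<in>J. (cmod (cinner n x (w j)))\<^sup>2)"
  unfolding parseval_identity[OF assms(1,2,2)] cinner_cnj_mult by simp

lemma parseval_quadratic_form:
  assumes A: "A \<in> carrier_mat n n" and sa: "mat_adjoint A = A"
    and w: "parseval_family n J w"
    and eigen: "\<forall>j\<in>J. A *\<^sub>v w j = complex_of_real (lam j) \<cdot>\<^sub>v w j"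
    and x: "x \<in> carrier_vec n"
  shows "cinner n (A *\<^sub>v x) x = of_real (\<Sum>j\<in>J. lam j * (cmod (cinner n x (w j)))\<^sup>2)"
proof -
  have "cinner n (A *\<^sub>v x) (w j) = of_real (lam j) * cinner n x (w j)" if j: "j \<in> J" for j
    using self_adjoint_cinner[OF A sa x parseval_family_carrier[OF w j]] eigen j
      parseval_family_carrier[OF w j] by (simp add: cinner_smult_right)
  then show ?thesis
    unfolding parseval_identity[OF w x mult_mat_vec_carrier[OF A x]]
    by (simp add: mult.assoc cinner_cnj_mult)
qed

lemma code_rayleigh_quotient:
  assumes C: "csubspace_vec n C" and B: "orthonormal_basis n C bs" and A: "A \<in> carrier_mat n n"
    and code: "proj_mat n bs * A * proj_mat n bs = complex_of_real eps \<cdot>\<^sub>m proj_mat n bs"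
    and v: "v \<in> C"
  shows "cinner n (A *\<^sub>v v) v = of_real eps * cinner n v v"
proof -
  let ?P = "proj_mat n bs"
  have vc: "v \<in> carrier_vec n" using v csubspace_carrier[OF C] by auto
  have Pv: "?P *\<^sub>v v = v" by (rule proj_mat_fixes[OF B csubspace_carrier[OF C] v])
  have "?P *\<^sub>v (A *\<^sub>v v) = (?P * A) *\<^sub>v (?P *\<^sub>v v)"
    unfolding Pv using A vc by (intro assoc_mult_mat_vec[symmetric]) auto
  also have "\<dots> = (?P * A * ?P) *\<^sub>v v"
    using A vc by (intro assoc_mult_mat_vec[symmetric]) auto
  also have "\<dots> = of_real eps \<cdot>\<^sub>v v"
    unfolding code smult_mat_mult_vec[OF proj_mat_carrier vc] Pv ..
  finally have PAv: "?P *\<^sub>v (A *\<^sub>v v) = of_real eps \<cdot>\<^sub>v v" .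
  have "cinner n (A *\<^sub>v v) v = cinner n (A *\<^sub>v v) (?P *\<^sub>v v)" unfolding Pv ..
  also have "\<dots> = cinner n (?P *\<^sub>v (A *\<^sub>v v)) v"
    using A vc by (simp add: self_adjoint_cinner[OF proj_mat_carrier proj_mat_adjoint])
  also have "\<dots> = of_real eps * cinner n v v"
    unfolding PAv using vc by (simp add: cinner_smult_left)
  finally show ?thesis .
qed

lemma orthonormal_basis_orthogonal_vector:
  assumes C: "csubspace_vec n C" and B: "orthonormal_basis n C bs"
    and S: "finite S" "card S < length bs"
  shows "\<exists>v\<in>C. v \<noteq> 0\<^sub>v n \<and> (\<forall>s\<in>S. cinner n v (w s) = 0)"
proof -
  from homogeneous_system_nontrivial_solution[OF S, of "\<lambda>s k. cinner n (bs ! k) (w s)"]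
  obtain c where c: "\<exists>k<length bs. c k \<noteq> 0"
    "\<forall>s\<in>S. (\<Sum>k<length bs. cinner n (bs ! k) (w s) * c k) = 0"
    by auto
  then obtain k0 where k0: "k0 < length bs" "c k0 \<noteq> 0" by auto
  have "lin_comb n bs c \<noteq> 0\<^sub>v n"
  proof
    assume "lin_comb n bs c = 0\<^sub>v n"
    then have "cinner n (lin_comb n bs c) (bs ! k0) = 0" unfolding cinner_def by simp
    then show False using orthonormal_coeff[OF orthonormal_basisD(1)[OF B] k0(1)] k0(2) by simp
  qed
  moreover have "\<forall>s\<in>S. cinner n (lin_comb n bs c) (w s) = 0"
    unfolding cinner_lin_comb_left using c(2) by (simp add: mult.commute)
  ultimately show ?thesis using lin_comb_in_csubspace[OF C orthonormal_basisD(2)[OF B]] by blast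
qed

text \<open>Min-max: C contains a vector orthogonal to the top r eigenvectors, on which the Rayleigh
  quotient of A is at most the (r+1)-st eigenvalue.\<close>
lemma code_value_le_eigenvalue:
  assumes C: "csubspace_vec n C" and B: "orthonormal_basis n C bs" and A: "A \<in> carrier_mat n n"
    and sa: "mat_adjoint A = A"
    and code: "proj_mat n bs * A * proj_mat n bs = complex_of_real eps \<cdot>\<^sub>m proj_mat n bs"
    and w: "parseval_family n {1..n} w"
    and eigen: "\<forall>j\<in>{1..n}. A *\<^sub>v w j = complex_of_real (lam j) \<cdot>\<^sub>v w j"
    and antimono: "\<forall>j. r < j \<and> j \<le> n \<longrightarrow> lam j \<le> lam (Suc r)"
    and dim: "r < length bs"
  shows "eps \<le> lam (Suc r)"
proof -
  obtain v where v: "v \<in> C" "v \<noteq> 0\<^sub>v n" and orth: "\<forall>s\<in>{1..r}. cinner n v (w s) = 0"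
    using orthonormal_basis_orthogonal_vector[OF C B, of "{1..r}"] dim by auto
  have vc: "v \<in> carrier_vec n" using v csubspace_carrier[OF C] by auto
  have "complex_of_real (\<Sum>j\<in>{1..n}. lam j * (cmod (cinner n v (w j)))\<^sup>2) = cinner n (A *\<^sub>v v) v"
    by (rule parseval_quadratic_form[OF A sa w eigen vc, symmetric])
  also have "\<dots> = of_real eps * cinner n v v" by (rule code_rayleigh_quotient[OF C B A code v(1)])
  also have "\<dots> = of_real (eps * Re (cinner n v v))" by (subst cinner_self_real) simp
  finally have "eps * Re (cinner n v v) = (\<Sum>j\<in>{1..n}. lam j * (cmod (cinner n v (w j)))\<^sup>2)"
    by (simp only: of_real_eq_iff)
  also have "\<dots> \<le> (\<Sum>j\<in>{1..n}. lam (Suc r) * (cmod (cinner n v (w j)))\<^sup>2)"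
  proof (rule sum_mono)
    fix j assume j: "j \<in> {1..n}"
    show "lam j * (cmod (cinner n v (w j)))\<^sup>2 \<le> lam (Suc r) * (cmod (cinner n v (w j)))\<^sup>2"
      using orth antimono j by (cases "j \<le> r") (auto intro: mult_right_mono)
  qed
  also have "\<dots> = lam (Suc r) * Re (cinner n v v)"
    using parseval_norm[OF w vc] by (simp add: sum_distrib_left)
  finally show ?thesis using cinner_self_pos[OF vc v(2)] by simp
qed

text \<open>Testing the code condition on P w_s, whose inner product with w_s is its own squared norm.\<close>
lemma proj_weight_eigenvector_bound:
  assumes C: "csubspace_vec n C" and B: "orthonormal_basis n C bs" and A: "A \<in> carrier_mat n n"
    and sa: "mat_adjoint A = A"
    and code: "proj_mat n bs * A * proj_mat n bs = complex_of_real eps \<cdot>\<^sub>m proj_mat n bs"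
    and w: "parseval_family n {1..n} w"
    and eigen: "\<forall>j\<in>{1..n}. A *\<^sub>v w j = complex_of_real (lam j) \<cdot>\<^sub>v w j"
    and nonneg: "\<forall>j\<in>{1..n}. lam j \<ge> 0"
    and s: "s \<in> {1..n}"
  shows "lam s * (proj_weight n bs (w s))\<^sup>2 \<le> eps * proj_weight n bs (w s)"
proof -
  define om where "om = proj_weight n bs (w s)"
  have Cc: "C \<subseteq> carrier_vec n" by (rule csubspace_carrier[OF C])
  have ws: "w s \<in> carrier_vec n" by (rule parseval_family_carrier[OF w s])
  define x where "x = proj_mat n bs *\<^sub>v w s"
  have xC: "x \<in> C" unfolding x_def by (rule proj_mat_range[OF C B ws])
  have xc: "x \<in> carrier_vec n" unfolding x_def using ws by simp
  have xw: "cinner n x (w s) = of_real om"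
    unfolding x_def om_def by (rule cinner_proj_mat_self[OF ws])
  have "cinner n x x = cinner n (w s) (proj_mat n bs *\<^sub>v x)"
    unfolding x_def using ws by (simp add: self_adjoint_cinner[OF proj_mat_carrier proj_mat_adjoint])
  also have "\<dots> = of_real om"
    using proj_mat_fixes[OF B Cc xC] xw by (simp add: cinner_swap[of n "w s"])
  finally have xx: "cinner n x x = of_real om" .
  have "cmod (cinner n x (w s)) = om" unfolding xw om_def using proj_weight_nonneg by simp
  then have "lam s * om\<^sup>2 = lam s * (cmod (cinner n x (w s)))\<^sup>2" by simp
  also have "\<dots> \<le> (\<Sum>j\<in>{1..n}. lam j * (cmod (cinner n x (w j)))\<^sup>2)"
    by (rule member_le_sum[of s _ "\<lambda>j. lam j * (cmod (cinner n x (w j)))\<^sup>2"]) (use s nonneg in auto)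
  also have "\<dots> = eps * om"
  proof -
    have "complex_of_real (\<Sum>j\<in>{1..n}. lam j * (cmod (cinner n x (w j)))\<^sup>2) = of_real eps * cinner n x x"
      unfolding parseval_quadratic_form[OF A sa w eigen xc, symmetric] by (rule code_rayleigh_quotient[OF C B A code xC])
    then show ?thesis unfolding xx by (simp only: of_real_mult[symmetric] of_real_eq_iff)
  qed
  finally show ?thesis unfolding om_def .
qed

lemma proj_weight_eigenvector_lt:
  assumes C: "csubspace_vec n C" and B: "orthonormal_basis n C bs" and A: "A \<in> carrier_mat n n"
    and sa: "mat_adjoint A = A"
    and code: "proj_mat n bs * A * proj_mat n bs = complex_of_real eps \<cdot>\<^sub>m proj_mat n bs"
    and w: "parseval_family n {1..n} w"
    and eigen: "\<forall>j\<in>{1..n}. A *\<^sub>v w j = complex_of_real (lam j) \<cdot>\<^sub>v w j"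
    and nonneg: "\<forall>j\<in>{1..n}. lam j \<ge> 0"
    and antimono: "\<forall>j. r < j \<and> j \<le> n \<longrightarrow> lam j \<le> lam (Suc r)"
    and dim: "r < length bs" and s: "s \<in> {1..n}"
    and gap: "lam (Suc r) < lam s * \<delta>"
  shows "proj_weight n bs (w s) < \<delta>"
proof -
  define om where "om = proj_weight n bs (w s)"
  have eps: "eps \<le> lam (Suc r)" by (rule code_value_le_eigenvalue[OF C B A sa code w eigen antimono dim])
  have "Suc r \<le> n" using dim orthonormal_length_le[OF orthonormal_basisD(1)[OF B]] by simp
  then have "lam (Suc r) \<ge> 0" using nonneg by simp
  with gap have "lam s * \<delta> > 0" by linarith
  moreover have "lam s \<ge> 0" using nonneg s by blast
  ultimately have pos: "lam s > 0" "\<delta> > 0" by (auto simp: zero_less_mult_iff)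
  show ?thesis
  proof (cases "om = 0")
    case False
    then have "om > 0" using proj_weight_nonneg unfolding om_def by (simp add: less_le)
    moreover have "lam s * om\<^sup>2 \<le> eps * om"
      unfolding om_def by (rule proj_weight_eigenvector_bound[OF C B A sa code w eigen nonneg s])
    ultimately have "lam s * om \<le> eps" by (simp add: power2_eq_square mult.assoc[symmetric])
    then have "lam s * om < lam s * \<delta>" using eps gap by simp
    then show ?thesis using pos unfolding om_def by simp
  qed (use pos om_def in simp)
qed

section \<open>The step logarithm\<close>

text \<open>For m \<ge> 1 the largest N with slog N (m + 1) \<le> k; only one direction of this is needed.\<close>
fun slog_capacity :: "nat \<Rightarrow> nat \<Rightarrow> nat" where
  "slog_capacity m 0 = 0"
| "slog_capacity m (Suc k) = slog_capacity m k + slog_capacity m k div m + 1"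

lemma slog_le_of_le_slog_capacity:
  assumes "N \<le> slog_capacity m k"
  shows "slog N (m + 1) \<le> k"
  using assms
proof (induction k arbitrary: N)
  case 0
  then show ?case by (subst slog.simps) simp
next
  case (Suc k)
  define M where "M = slog_capacity m k"
  have N: "N \<le> M + M div m + 1" using Suc.prems unfolding M_def by simp
  have step: "N - nat \<lceil>real N / real (m + 1)\<rceil> \<le> M"
  proof (cases "N \<le> M")
    case False
    define t where "t = N - M"
    have "(t - 1) * m \<le> M div m * m" using N False unfolding t_def by (intro mult_right_mono) auto
    also have "\<dots> \<le> M" using div_mult_mod_eq[of M m] by linarith
    finally have "real (t - 1) * real m \<le> real M" by (metis of_nat_le_iff of_nat_mult)
    then have "(real t - 1) * real (m + 1) < real N"
      using False unfolding t_def by (simp add: of_nat_diff algebra_simps)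
    then have "real t - 1 < real N / real (m + 1)" by (simp add: field_simps)
    then have "t \<le> nat \<lceil>real N / real (m + 1)\<rceil>" by (simp add: le_nat_iff le_ceiling_iff)
    then show ?thesis unfolding t_def by linarith
  qed simp
  show ?case
  proof (cases "N = 0")
    case False
    then have "slog N (m + 1) = slog (N - nat \<lceil>real N / real (m + 1)\<rceil>) (m + 1) + 1"
      by (subst slog.simps) simp
    with Suc.IH[OF step[unfolded M_def]] show ?thesis by simp
  qed (subst slog.simps, simp)
qed

text \<open>Induction on card K, removing a member of maximal size: by the hypothesis at r = d C0 - 1,
  the others have total size at least m (d C0 - 1).\<close>
lemma sum_le_slog_capacity:
  fixes d :: "'a \<Rightarrow> nat"
  assumes m: "m \<ge> 1" and "finite K"
    and "\<forall>r. min (sum d K) (m * r) \<le> sum d {C\<in>K. d C \<le> r}"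
  shows "sum d K \<le> slog_capacity m (card K)"
  using assms(2-)
proof (induction "card K" arbitrary: K)
  case 0
  then show ?case by simp
next
  case (Suc k)
  then have "K \<noteq> {}" by auto
  then have "Max (d ` K) \<in> d ` K" using Suc.prems(1) by (intro Max_in) auto
  then obtain C0 where "C0 \<in> K" "d C0 = Max (d ` K)" by auto
  then have C0: "C0 \<in> K" "\<forall>C\<in>K. d C \<le> d C0" using Suc.prems(1) by auto
  define K' where "K' = K - {C0}"
  have fin: "finite K'" and card: "card K' = k" and total: "sum d K = sum d K' + d C0"
    using Suc.hyps(2) Suc.prems(1) C0(1) unfolding K'_def by (auto simp: sum.remove)
  have "min (sum d K') (m * r) \<le> sum d {C\<in>K'. d C \<le> r}" for r
  proof (cases "r < d C0")
    case True
    then have "{C\<in>K'. d C \<le> r} = {C\<in>K. d C \<le> r}" unfolding K'_def by auto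
    then show ?thesis using Suc.prems(2) total by (metis min.mono order_refl le_add1 order_trans)
  next
    case False
    then have "{C\<in>K'. d C \<le> r} = K'" unfolding K'_def using C0 by force
    then show ?thesis by simp
  qed
  then have IH: "sum d K' \<le> slog_capacity m k" using Suc.hyps(1)[OF card[symmetric] fin] card by auto
  have "d C0 \<le> sum d K' div m + 1"
  proof (cases "d C0 = 0")
    case False
    have "{C\<in>K. d C \<le> d C0 - 1} \<subseteq> K'" unfolding K'_def using False by auto
    then have "min (sum d K) (m * (d C0 - 1)) \<le> sum d K'"
      using Suc.prems(2) sum_mono2[OF fin] by (meson order_trans zero_le)
    then have "m * (d C0 - 1) \<le> sum d K'" using total False by linarith
    then have "(m * (d C0 - 1)) div m \<le> sum d K' div m" by (rule div_le_mono)
    then show ?thesis using m by simp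
  qed simp
  then have "sum d K \<le> sum d K' + sum d K' div m + 1" using total by linarith
  also have "\<dots> \<le> slog_capacity m k + slog_capacity m k div m + 1"
    using IH div_le_mono by (simp add: add_mono)
  finally show ?case using Suc.hyps(2)[symmetric] by simp
qed

lemma slog_le_card:
  fixes d :: "'a \<Rightarrow> nat"
  assumes "m \<ge> 1" and "finite K"
    and "\<forall>r. min (sum d K) (m * r) \<le> sum d {C\<in>K. d C \<le> r}"
  shows "slog (sum d K) (m + 1) \<le> card K"
  using assms by (intro slog_le_of_le_slog_capacity sum_le_slog_capacity)

section \<open>Colorings\<close>

lemma parseval_sum_proj_weight:
  assumes v: "parseval_family n J v" and on: "orthonormal n bs"
  shows "(\<Sum>j\<in>J. proj_weight n bs (v j)) = real (length bs)"
proof -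
  have "(\<Sum>j\<in>J. (cmod (cinner n (v j) (bs ! k)))\<^sup>2) = 1" if k: "k < length bs" for k
  proof -
    have "of_real (\<Sum>j\<in>J. (cmod (cinner n (bs ! k) (v j)))\<^sup>2) = cinner n (bs ! k) (bs ! k)"
      using parseval_norm[OF v orthonormal_carrier[OF on k]] by simp
    also have "\<dots> = 1" using on k unfolding orthonormal_def by auto
    finally have "(\<Sum>j\<in>J. (cmod (cinner n (bs ! k) (v j)))\<^sup>2) = 1" by (simp only: of_real_eq_1_iff)
    then show ?thesis by (simp add: cinner_swap[of n "bs ! k"])
  qed
  then show ?thesis unfolding proj_weight_def by (subst sum.swap) simp
qed

lemma resolution_of_identity_cinner:
  assumes K: "finite K" and P: "\<forall>C\<in>K. P C \<in> carrier_mat n n"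
    and sum_I: "mat n n (\<lambda>(p, q). \<Sum>C\<in>K. P C $$ (p, q)) = 1\<^sub>m n"
    and y: "y \<in> carrier_vec n"
  shows "(\<Sum>C\<in>K. cinner n (P C *\<^sub>v y) y) = cinner n y y"
proof -
  have I: "(\<Sum>C\<in>K. P C $$ (p, q)) = (if p = q then 1 else 0)" if "p < n" "q < n" for p q
    using arg_cong[OF sum_I, of "\<lambda>M. M $$ (p, q)"] that by simp
  have "(\<Sum>C\<in>K. cinner n (P C *\<^sub>v y) y)
      = (\<Sum>C\<in>K. \<Sum>p<n. \<Sum>q<n. P C $$ (p, q) * (y $ q * cnj (y $ p)))"
    unfolding cinner_def
  proof (intro sum.cong refl)
    fix C p assume "C \<in> K" "p \<in> {..<n}"
    then show "(P C *\<^sub>v y) $ p * cnj (y $ p) = (\<Sum>q<n. P C $$ (p, q) * (y $ q * cnj (y $ p)))"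
      using P by (simp add: mult_mat_vec_nth[OF _ y] sum_distrib_right mult.assoc)
  qed
  also have "\<dots> = (\<Sum>p<n. \<Sum>q<n. (\<Sum>C\<in>K. P C $$ (p, q)) * (y $ q * cnj (y $ p)))"
    by (simp add: sum_distrib_right sum.swap[of _ K])
  also have "\<dots> = (\<Sum>p<n. \<Sum>q<n. if p = q then y $ q * cnj (y $ p) else 0)"
    using I by (intro sum.cong refl) simp
  also have "\<dots> = cinner n y y" unfolding cinner_def by simp
  finally show ?thesis .
qed

definition code_basis :: "nat \<Rightarrow> complex vec set \<Rightarrow> complex vec list" where
  "code_basis n C = (SOME bs. orthonormal_basis n C bs)"

definition cdim :: "nat \<Rightarrow> complex vec set \<Rightarrow> nat" where
  "cdim n C = length (code_basis n C)"

definition code_weight :: "nat \<Rightarrow> complex vec set \<Rightarrow> complex vec \<Rightarrow> real" where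
  "code_weight n C y = proj_weight n (code_basis n C) y"

lemma code_basis_orthonormal_basis: "csubspace_vec n C \<Longrightarrow> orthonormal_basis n C (code_basis n C)"
  unfolding code_basis_def using orthonormal_basis_exists by (rule someI_ex)

lemma orth_proj_code_basis: "csubspace_vec n C \<Longrightarrow> orth_proj n C = proj_mat n (code_basis n C)"
  by (rule orth_proj_eq_proj_mat[OF _ code_basis_orthonormal_basis])

lemma cdim_le: "csubspace_vec n C \<Longrightarrow> cdim n C \<le> n"
  unfolding cdim_def
  by (rule orthonormal_length_le[OF orthonormal_basisD(1)[OF code_basis_orthonormal_basis]])

lemma code_weight_nonneg: "code_weight n C y \<ge> 0"
  unfolding code_weight_def by (rule proj_weight_nonneg)

lemma parseval_sum_code_weight:
  "csubspace_vec n C \<Longrightarrow> parseval_family n J v \<Longrightarrow> (\<Sum>j\<in>J. code_weight n C (v j)) = real (cdim n C)"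
  unfolding code_weight_def cdim_def
  by (rule parseval_sum_proj_weight[OF _ orthonormal_basisD(1)[OF code_basis_orthonormal_basis]])

lemma coloring_sum_code_weight:
  assumes K: "is_coloring n E K" and y: "y \<in> carrier_vec n"
  shows "(\<Sum>C\<in>K. code_weight n C y) = Re (cinner n y y)"
proof -
  have sub: "\<forall>C\<in>K. csubspace_vec n C" using K unfolding is_coloring_def is_code_def by auto
  have "complex_of_real (\<Sum>C\<in>K. code_weight n C y) = (\<Sum>C\<in>K. cinner n (orth_proj n C *\<^sub>v y) y)"
    unfolding of_real_sum using sub y
    by (intro sum.cong refl) (simp add: orth_proj_code_basis cinner_proj_mat_self code_weight_def)
  also have "\<dots> = cinner n y y"
    using K y sub orth_proj_code_basis unfolding is_coloring_def
    by (intro resolution_of_identity_cinner) auto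
  finally show ?thesis by (metis Re_complex_of_real)
qed

lemma code_weight_eigenvector_lt:
  assumes code: "is_code n E C" and AE: "A \<in> E" and A: "A \<in> carrier_mat n n"
    and sa: "mat_adjoint A = A"
    and w: "parseval_family n {1..n} w"
    and eigen: "\<forall>j\<in>{1..n}. A *\<^sub>v w j = complex_of_real (lam j) \<cdot>\<^sub>v w j"
    and nonneg: "\<forall>j\<in>{1..n}. lam j \<ge> 0"
    and antimono: "\<forall>j. r < j \<and> j \<le> n \<longrightarrow> lam j \<le> lam (Suc r)"
    and dim: "r < cdim n C" and s: "s \<in> {1..n}"
    and gap: "lam (Suc r) < lam s * \<delta>"
  shows "code_weight n C (w s) < \<delta>"
proof -
  have C: "csubspace_vec n C" using code unfolding is_code_def by auto
  obtain eps where "orth_proj n C * A * orth_proj n C = complex_of_real eps \<cdot>\<^sub>m orth_proj n C"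
    using code AE unfolding is_code_def by auto
  then have "proj_mat n (code_basis n C) * A * proj_mat n (code_basis n C)
      = complex_of_real eps \<cdot>\<^sub>m proj_mat n (code_basis n C)"
    unfolding orth_proj_code_basis[OF C] .
  from proj_weight_eigenvector_lt[OF C code_basis_orthonormal_basis[OF C] A sa this w eigen nonneg
      antimono _ s gap] dim
  show ?thesis unfolding code_weight_def cdim_def .
qed

lemma nat_ceiling_div_mem:
  assumes "m \<ge> 1" "1 \<le> l" "l \<le> m * r"
  shows "nat \<lceil>real l / real m\<rceil> \<in> {1..r}"
proof -
  have "real l / real m > 0" using assms by simp
  then have "1 \<le> \<lceil>real l / real m\<rceil>" by (simp add: le_ceiling_iff)
  moreover have "real l \<le> real m * real r" using assms(3) by (metis of_nat_le_iff of_nat_mult)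
  then have "real l / real m \<le> real r" using assms(1) by (simp add: divide_le_eq mult.commute)
  then have "\<lceil>real l / real m\<rceil> \<le> int r" by (simp add: ceiling_le_iff)
  moreover have "nat c \<in> {1..r}" if "1 \<le> c" "c \<le> int r" for c :: int using that by auto
  ultimately show ?thesis by blast
qed

section \<open>Tropical quantum graphs\<close>

lemma lincomb_indicator:
  assumes i: "i \<in> {1..m}" and A: "A i \<in> carrier_mat n n"
  shows "lincomb n m A (\<lambda>j. if j = i then 1 else 0) = A i"
proof (rule eq_matI)
  fix p q assume "p < dim_row (A i)" "q < dim_col (A i)"
  then have "p < n" "q < n" using A by auto
  moreover have "(\<Sum>j=1..m. complex_of_real (if j = i then 1 else 0) * A j $$ (p, q)) = A i $$ (p, q)"
    using i by (simp add: if_distrib if_distribR cong: if_cong)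
  ultimately show "lincomb n m A (\<lambda>j. if j = i then 1 else 0) $$ (p, q) = A i $$ (p, q)"
    unfolding lincomb_def using i by simp
qed (use A in \<open>auto simp: lincomb_def\<close>)

text \<open>Of the hypotheses on Q_{n,m}, the bound only uses the tropical eigenvalues and the
  enumeration (iv).\<close>
locale tropical_eigenbasis =
  fixes n m :: nat and A :: "nat \<Rightarrow> complex mat" and lam :: "nat \<Rightarrow> nat \<Rightarrow> real"
    and w :: "nat \<Rightarrow> nat \<Rightarrow> complex vec" and u :: "nat \<Rightarrow> complex vec"
  assumes n2: "n \<ge> 2" and m1: "1 \<le> m"
    and A_carrier: "\<forall>i\<in>{1..m}. A i \<in> carrier_mat n n"
    and A_selfadj: "\<forall>i\<in>{1..m}. mat_adjoint (A i) = A i"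
    and u_carrier: "\<forall>l\<in>{1..n}. u l \<in> carrier_vec n"
    and u_orthonormal: "\<forall>k\<in>{1..n}. \<forall>l\<in>{1..n}. u k \<bullet>c u l = (if k = l then 1 else 0)"
    and w_perm: "\<forall>i\<in>{1..m}. bij_betw (w i) {1..n} (u ` {1..n})"
    and w_eigen: "\<forall>i\<in>{1..m}. \<forall>j\<in>{1..n}. A i *\<^sub>v w i j = complex_of_real (lam i j) \<cdot>\<^sub>v w i j"
    and tropical: "\<forall>i\<in>{1..m}. \<forall>j. 1 \<le> j \<and> j < n \<longrightarrow>
                     0 < lam i (j + 1) \<and> lam i (j + 1) < lam i j / (real n)^2"
    and enum: "\<forall>l\<in>{1..n}. \<exists>i\<in>{1..m}. u l = w i (nat \<lceil>real l / real m\<rceil>)"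
begin

lemma u_cinner: "k \<in> {1..n} \<Longrightarrow> l \<in> {1..n} \<Longrightarrow> cinner n (u k) (u l) = (if k = l then 1 else 0)"
  using u_orthonormal u_carrier cscalar_prod_eq_cinner by metis

lemma u_inj: "inj_on u {1..n}"
  by (rule inj_onI) (metis u_cinner zero_neq_one)

lemma u_parseval: "parseval_family n {1..n} u"
proof -
  define us where "us = map (\<lambda>k. u (Suc k)) [0..<n]"
  have len: "length us = n" and nth: "\<And>k. k < n \<Longrightarrow> us ! k = u (Suc k)"
    unfolding us_def by simp_all
  have "orthonormal n us"
    unfolding orthonormal_def using len nth u_carrier u_cinner by (auto simp: set_conv_nth)
  from orthonormal_full_length_parseval[OF this len] show ?thesis
  proof (rule parseval_family_reindex)
    show "bij_betw (\<lambda>l. l - 1) {1..n} {..<n}"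
      by (rule bij_betw_byWitness[where f' = Suc]) auto
  qed (auto simp: nth)
qed

lemma w_parseval:
  assumes i: "i \<in> {1..m}"
  shows "parseval_family n {1..n} (w i)"
proof (rule parseval_family_reindex[OF u_parseval])
  have w_range: "w i ` {1..n} = u ` {1..n}" using w_perm i unfolding bij_betw_def by auto
  show "bij_betw (the_inv_into {1..n} u \<circ> w i) {1..n} {1..n}"
    using w_perm i bij_betw_the_inv_into[OF inj_on_imp_bij_betw[OF u_inj]] by (auto intro: bij_betw_trans)
  show "\<forall>j\<in>{1..n}. w i j = u ((the_inv_into {1..n} u \<circ> w i) j)"
  proof
    fix j assume "j \<in> {1..n}"
    then have "w i j \<in> u ` {1..n}" using w_range by blast
    then show "w i j = u ((the_inv_into {1..n} u \<circ> w i) j)"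
      unfolding comp_apply by (rule f_the_inv_into_f[OF u_inj, symmetric])
  qed
qed

lemma lam_pos:
  assumes i: "i \<in> {1..m}" and j: "j \<in> {1..n}"
  shows "lam i j > 0"
proof (cases "j = 1")
  case True
  have "1 \<le> (1::nat) \<and> 1 < n" using n2 by simp
  then have "0 < lam i (1 + 1) \<and> lam i (1 + 1) < lam i 1 / (real n)\<^sup>2" using tropical i by blast
  then have "0 < lam i 1 / (real n)\<^sup>2" by linarith
  then show ?thesis using True by (simp add: zero_less_divide_iff)
next
  case False
  then have "1 \<le> j - 1 \<and> j - 1 < n" using j by auto
  then have "0 < lam i (j - 1 + 1)" using tropical i by blast
  then show ?thesis using False j by simp
qed

lemma lam_antimono:
  assumes i: "i \<in> {1..m}" and "1 \<le> a" "a \<le> b" "b \<le> n"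
  shows "lam i b \<le> lam i a"
  using assms(3,4)
proof (induction b)
  case (Suc b)
  show ?case
  proof (cases "a = Suc b")
    case False
    then have b: "1 \<le> b" "a \<le> b" "b < n" using Suc.prems assms(2) by auto
    then have "lam i (b + 1) < lam i b / (real n)\<^sup>2" using tropical i by blast
    also have "\<dots> \<le> lam i b" using lam_pos[OF i, of b] b n2 by (simp add: divide_le_eq)
    finally show ?thesis using Suc.IH b by simp
  qed simp
qed (use assms(2) in simp)

lemma lam_gap:
  assumes i: "i \<in> {1..m}" and "1 \<le> s" "s \<le> r" "r < n"
  shows "lam i (Suc r) < lam i s * (1 / (real n)\<^sup>2)"
proof -
  have "lam i (Suc r) \<le> lam i (Suc s)" using lam_antimono[OF i, of "Suc s" "Suc r"] assms by simp
  also have "\<dots> < lam i s / (real n)\<^sup>2" using tropical i assms by force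
  finally show ?thesis by simp
qed

context
  fixes E :: "complex mat set" and K :: "complex vec set set"
  assumes coloring: "is_coloring n E K" and A_in_E: "\<forall>i\<in>{1..m}. A i \<in> E"
begin

lemma coloring_csubspace: "C \<in> K \<Longrightarrow> csubspace_vec n C"
  using coloring unfolding is_coloring_def is_code_def by auto

lemma coloring_sum_cdim: "sum (cdim n) K = n"
proof -
  have "real (sum (cdim n) K) = (\<Sum>C\<in>K. \<Sum>l\<in>{1..n}. code_weight n C (u l))"
    unfolding of_nat_sum
    by (intro sum.cong refl) (rule parseval_sum_code_weight[OF coloring_csubspace u_parseval, symmetric])
  also have "\<dots> = (\<Sum>l\<in>{1..n}. Re (cinner n (u l) (u l)))"
    by (subst sum.swap) (simp add: coloring_sum_code_weight[OF coloring] u_carrier)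
  also have "\<dots> = n" by (simp add: u_cinner)
  finally show ?thesis by (simp only: of_nat_sum[symmetric] of_nat_eq_iff)
qed

text \<open>The first m r vectors u_l are among the top r eigenvectors of some A_i, so by the tropical
  gap a code of dimension above r barely sees them.\<close>
lemma code_weight_u_lt:
  assumes C: "C \<in> K" and dim: "r < cdim n C" and l: "l \<in> {1..min n (m * r)}"
  shows "code_weight n C (u l) < 1 / (real n)\<^sup>2"
proof -
  from l have "l \<in> {1..n}" by simp
  then obtain i where i: "i \<in> {1..m}" and ul: "u l = w i (nat \<lceil>real l / real m\<rceil>)"
    using enum by blast
  have s: "nat \<lceil>real l / real m\<rceil> \<in> {1..r}" using l m1 by (intro nat_ceiling_div_mem) auto
  have rn: "r < n" using dim cdim_le[OF coloring_csubspace[OF C]] by simp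
  have code: "is_code n E C" using coloring C unfolding is_coloring_def by auto
  show ?thesis unfolding ul
  proof (rule code_weight_eigenvector_lt[OF code _ _ _ w_parseval[OF i] _ _ _ dim])
    show "A i \<in> E" "A i \<in> carrier_mat n n" "mat_adjoint (A i) = A i"
      using A_in_E A_carrier A_selfadj i by auto
    show "\<forall>j\<in>{1..n}. A i *\<^sub>v w i j = complex_of_real (lam i j) \<cdot>\<^sub>v w i j" using w_eigen i by auto
    show "\<forall>j\<in>{1..n}. 0 \<le> lam i j" using lam_pos[OF i] by (auto intro: less_imp_le)
    show "\<forall>j. r < j \<and> j \<le> n \<longrightarrow> lam i j \<le> lam i (Suc r)" using lam_antimono[OF i] by auto
    show "nat \<lceil>real l / real m\<rceil> \<in> {1..n}" using s rn by auto
    show "lam i (Suc r) < lam i (nat \<lceil>real l / real m\<rceil>) * (1 / (real n)\<^sup>2)"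
      using lam_gap[OF i] s rn by auto
  qed
qed

lemma large_codes_weight_lt_1:
  "(\<Sum>C\<in>{C\<in>K. r < cdim n C}. \<Sum>l\<in>{1..min n (m * r)}. code_weight n C (u l)) < 1"
  (is "(\<Sum>C\<in>?Kb. \<Sum>l\<in>{1..?L}. _) < 1")
proof (cases "?Kb = {} \<or> {1..?L} = {}")
  case True
  then show ?thesis by (elim disjE) (simp_all only: sum.empty sum.neutral_const zero_less_one)
next
  case False
  have fin: "finite K" using coloring unfolding is_coloring_def by auto
  have "card ?Kb = (\<Sum>C\<in>?Kb. 1)" by simp
  also have "\<dots> \<le> sum (cdim n) ?Kb" by (rule sum_mono) auto
  also have "\<dots> \<le> sum (cdim n) K" by (rule sum_mono2[OF fin]) auto
  finally have card: "card ?Kb \<le> n" unfolding coloring_sum_cdim .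
  have "(\<Sum>C\<in>?Kb. \<Sum>l\<in>{1..?L}. code_weight n C (u l)) < (\<Sum>C\<in>?Kb. \<Sum>l\<in>{1..?L}. 1 / (real n)\<^sup>2)"
    using False fin code_weight_u_lt by (intro sum_strict_mono) auto
  also have "\<dots> = real (card ?Kb) * real ?L / (real n)\<^sup>2" by simp
  also have "\<dots> \<le> real n * real n / (real n)\<^sup>2"
    using card by (intro divide_right_mono mult_mono) auto
  also have "\<dots> = 1" using n2 by (simp add: power2_eq_square)
  finally show ?thesis .
qed

text \<open>Weighing u_1, ..., u_L with L = min n (m r): in total they weigh L, large codes contribute
  less than 1, and a small code C at most its dimension.\<close>
lemma small_codes_cdim_sum_ge:
  "min n (m * r) \<le> sum (cdim n) {C\<in>K. cdim n C \<le> r}"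
proof -
  let ?Ks = "{C\<in>K. cdim n C \<le> r}" and ?Kb = "{C\<in>K. r < cdim n C}"
  let ?S = "{1..min n (m * r)}"
  let ?W = "\<lambda>C. \<Sum>l\<in>?S. code_weight n C (u l)"
  have fin: "finite K" using coloring unfolding is_coloring_def by auto
  have "real (min n (m * r)) = (\<Sum>l\<in>?S. \<Sum>C\<in>K. code_weight n C (u l))"
    by (simp add: coloring_sum_code_weight[OF coloring] u_carrier u_cinner)
  also have "\<dots> = (\<Sum>C\<in>?Ks. ?W C) + (\<Sum>C\<in>?Kb. ?W C)"
    by (subst sum.swap, subst sum.union_disjoint[symmetric]) (use fin in \<open>auto intro!: sum.cong\<close>)
  also have "(\<Sum>C\<in>?Ks. ?W C) \<le> (\<Sum>C\<in>?Ks. real (cdim n C))"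
  proof (rule sum_mono)
    fix C assume C: "C \<in> ?Ks"
    have "?W C \<le> (\<Sum>l\<in>{1..n}. code_weight n C (u l))"
      by (rule sum_mono2) (auto simp: code_weight_nonneg)
    also have "\<dots> = real (cdim n C)"
      using C by (intro parseval_sum_code_weight[OF coloring_csubspace u_parseval]) simp
    finally show "?W C \<le> real (cdim n C)" .
  qed
  finally have "real (min n (m * r)) < real (sum (cdim n) ?Ks) + 1"
    using large_codes_weight_lt_1[of r] by simp
  then show ?thesis by linarith
qed

lemma coloring_card_ge_slog: "slog n (m + 1) \<le> card K"
  using slog_le_card[OF m1, of K "cdim n"] small_codes_cdim_sum_ge coloring
  unfolding coloring_sum_cdim is_coloring_def by auto

end

end

theorem proposition2:
  fixes n m :: nat
    and E :: "complex mat set"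
    and A :: "nat \<Rightarrow> complex mat"
    and lam :: "nat \<Rightarrow> nat \<Rightarrow> real"
    and w :: "nat \<Rightarrow> nat \<Rightarrow> complex vec"
    and u :: "nat \<Rightarrow> complex vec"
    and K :: "complex vec set set"
  assumes n2: "n \<ge> 2" and m1: "1 \<le> m" and mn: "m \<le> n - 1"
    and A_carrier: "\<forall>i\<in>{1..m}. A i \<in> carrier_mat n n"
    and A_selfadj: "\<forall>i\<in>{1..m}. mat_adjoint (A i) = A i"
    and E_span: "E = range (lincomb n m A)"
    and E_basis: "\<forall>c. lincomb n m A c = 0\<^sub>m n n \<longrightarrow> (\<forall>i\<le>m. c i = 0)"
    and E_comm: "\<forall>X\<in>E. \<forall>Y\<in>E. X * Y = Y * X"
    and u_carrier: "\<forall>l\<in>{1..n}. u l \<in> carrier_vec n"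
    and u_orthonormal: "\<forall>k\<in>{1..n}. \<forall>l\<in>{1..n}. u k \<bullet>c u l = (if k = l then 1 else 0)"
    and w_perm: "\<forall>i\<in>{1..m}. bij_betw (w i) {1..n} (u ` {1..n})"
    and w_eigen: "\<forall>i\<in>{1..m}. \<forall>j\<in>{1..n}. A i *\<^sub>v w i j = complex_of_real (lam i j) \<cdot>\<^sub>v w i j"
    and tropical: "\<forall>i\<in>{1..m}. \<forall>j. 1 \<le> j \<and> j < n \<longrightarrow>
                     0 < lam i (j + 1) \<and> lam i (j + 1) < lam i j / (real n)^2"
    and cyclical: "\<forall>i. 1 \<le> i \<and> i < m \<longrightarrow>
                     (\<forall>j\<in>{1..n}. w (i + 1) j = w i ((j + shift n m i - 1) mod n + 1))"
    and enum: "\<forall>l\<in>{1..n}. \<exists>i\<in>{1..m}. u l = w i (nat \<lceil>real l / real m\<rceil>)"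
    and K_col: "is_coloring n E K"
  shows "card K \<ge> slog n (m + 1)"
proof -
  interpret tropical_eigenbasis n m A lam w u
    by unfold_locales (fact n2 m1 A_carrier A_selfadj u_carrier u_orthonormal w_perm w_eigen
        tropical enum)+
  have "\<forall>i\<in>{1..m}. A i \<in> E"
    using lincomb_indicator A_carrier unfolding E_span by (metis rangeI)
  then show ?thesis by (rule coloring_card_ge_slog[OF K_col])
qed

end
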